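(* Let $G$ be a prime tournament and $u\in V(G)$. Let $H_1,H_2$ be prime subtournaments of $G$ such that $V(H_1)\cup V(H_2)=V(G)\setminus\{u\}$, the subtournaments $H_1+u$ and $H_2+u$ are decomposable, and the subtournament $H_{1,2}$ induced on $V(H_1)\cap V(H_2)$ is prime with $|V(H_{1,2})|\ge 3$. Then either $u\in V_x(H_1)$ for some $x\in V(H_1)\setminus V(H_2)$, or $u\in V_y(H_2)$ for some $y\in V(H_2)\setminus V(H_1)$.
   Context: A tournament is a finite, non-null, loopless directed graph in which for any two distinct vertices $u,v$ there is exactly one edge with both ends in $\{u,v\}$. A subtournament is the tournament induced on a nonempty vertex subset; for a subtournament $H$ of $G$ and $v\in V(G)$, $H+v$ is the subtournament induced on $V(H)\cup\{v\}$. A homogeneous set of a tournament $G$ is a set $X\subseteq V(G)$ such that each vertex outside $X$ either has edges to all of $X$ or edges from all of $X$; it is nontrivial if $1<|X|<|V(G)|$. A tournament is prime if it has no nontrivial homogeneous set, and decomposable otherwise. For a subtournament $H$ of $G$ and $x\in V(H)$, $V_x(H)$ is the set of vertices $v\in V(G)\setminus V(H)$ such that $\{v,x\}$ is a homogeneous set of $H+v$. *)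

theory Defs
  imports Main
begin

definition tournament :: "'a set \<Rightarrow> ('a \<times> 'a) set \<Rightarrow> bool" where
  "tournament V E \<longleftrightarrow> finite V \<and> V \<noteq> {} \<and> E \<subseteq> V \<times> V \<and>
     (\<forall>v. (v, v) \<notin> E) \<and>
     (\<forall>u\<in>V. \<forall>v\<in>V. u \<noteq> v \<longrightarrow> ((u, v) \<in> E \<longleftrightarrow> (v, u) \<notin> E))"

(* The subtournament induced on S is (S, E \<inter> S \<times> S).  Since the notions below only
   look at edges between vertices of S, we evaluate them with vertex set S. *)

definition homogeneous :: "'a set \<Rightarrow> ('a \<times> 'a) set \<Rightarrow> 'a set \<Rightarrow> bool" where
  "homogeneous S E X \<longleftrightarrow> X \<subseteq> S \<and>
     (\<forall>v\<in>S - X. (\<forall>x\<in>X. (v, x) \<in> E) \<or> (\<forall>x\<in>X. (x, v) \<in> E))"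

definition prime_tour :: "'a set \<Rightarrow> ('a \<times> 'a) set \<Rightarrow> bool" where
  "prime_tour S E \<longleftrightarrow>
     \<not> (\<exists>X. homogeneous S E X \<and> 1 < card X \<and> card X < card S)"

definition decomposable :: "'a set \<Rightarrow> ('a \<times> 'a) set \<Rightarrow> bool" where
  "decomposable S E \<longleftrightarrow> \<not> prime_tour S E"

definition Vx :: "'a set \<Rightarrow> ('a \<times> 'a) set \<Rightarrow> 'a set \<Rightarrow> 'a \<Rightarrow> 'a set" where
  "Vx V E H x = {v \<in> V - H. homogeneous (insert v H) E {v, x}}"

end

theory Submission
  imports Defs
begin

text \<open>Suppose neither conclusion holds. As \<open>H\<^sub>i\<close> is prime but \<open>H\<^sub>i + u\<close> is not, either \<open>u\<close> is
  uniform on \<open>H\<^sub>i\<close> (it dominates all of \<open>H\<^sub>i\<close> or is dominated by all of it), or \<open>{u, x}\<close> is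
  homogeneous in \<open>H\<^sub>i + u\<close> (\<open>u\<close> is a twin of \<open>x\<close>) for some \<open>x\<close>, which then lies in \<open>H\<^sub>1\<^sub>,\<^sub>2\<close>. Restricted to the prime
  tournament \<open>H\<^sub>1\<^sub>,\<^sub>2\<close> with at least three vertices, \<open>u\<close> cannot be both uniform and a twin of a
  vertex \<open>x\<close> (then \<open>V(H\<^sub>1\<^sub>,\<^sub>2) \<setminus> {x}\<close> would be homogeneous), nor a twin of two vertices
  \<open>x \<noteq> y\<close> (then \<open>{x, y}\<close> would be homogeneous). So either \<open>u\<close> is uniform on both sides, and
  \<open>V(G) \<setminus> {u}\<close> is homogeneous in \<open>G\<close>, or \<open>u\<close> is a twin of the same \<open>x\<close> on both sides, and
  \<open>{u, x}\<close> is homogeneous in \<open>G\<close>; both contradict primality of \<open>G\<close>.\<close>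

lemma tournament_asym:
  assumes "tournament V E" "(a, b) \<in> E"
  shows "(b, a) \<notin> E"
proof -
  have "a \<in> V" "b \<in> V" "a \<noteq> b"
    using assms unfolding tournament_def by auto
  then show ?thesis
    using assms unfolding tournament_def by blast
qed

lemma prime_tourE:
  assumes "prime_tour S E" "homogeneous S E X" "1 < card X" "card X < card S"
  shows False
  using assms unfolding prime_tour_def by blast

lemma homogeneous_restrict:
  assumes "homogeneous S E X" "T \<subseteq> S"
  shows "homogeneous T E (X \<inter> T)"
  using assms unfolding homogeneous_def by blast

lemma homogeneous_Un_ambient:
  assumes "homogeneous S E X" "homogeneous T E X"
  shows "homogeneous (S \<union> T) E X"
  using assms unfolding homogeneous_def by blast

lemma homogeneous_pairD:
  assumes "homogeneous S E {u, x}" "w \<in> S - {u, x}"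
  shows "(w, u) \<in> E \<and> (w, x) \<in> E \<or> (u, w) \<in> E \<and> (x, w) \<in> E"
  using assms unfolding homogeneous_def by auto

lemma homogeneous_insert_uniform:
  assumes "homogeneous (insert u X) E X" "u \<notin> X"
  shows "(\<forall>w\<in>X. (u, w) \<in> E) \<or> (\<forall>w\<in>X. (w, u) \<in> E)"
  using assms unfolding homogeneous_def by auto

lemma homogeneous_insert_Un:
  assumes "tournament V E" "homogeneous (insert u X) E X" "homogeneous (insert u Y) E Y"
    and "X \<inter> Y \<noteq> {}"
  shows "homogeneous (insert u (X \<union> Y)) E (X \<union> Y)"
proof (cases "u \<in> X \<union> Y")
  case True
  then show ?thesis unfolding homogeneous_def by auto
next
  case False
  obtain w where "w \<in> X" "w \<in> Y"
    using assms(4) by blast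
  then have "(\<forall>w\<in>X \<union> Y. (u, w) \<in> E) \<or> (\<forall>w\<in>X \<union> Y. (w, u) \<in> E)"
    using homogeneous_insert_uniform[OF assms(2)] homogeneous_insert_uniform[OF assms(3)] False
      tournament_asym[OF assms(1), of u w] tournament_asym[OF assms(1), of w u] by blast
  then show ?thesis unfolding homogeneous_def by auto
qed

lemma prime_tour_insert_cases:
  assumes "finite H" "v \<notin> H" "prime_tour H E" "decomposable (insert v H) E"
  shows "homogeneous (insert v H) E H \<or> (\<exists>x\<in>H. homogeneous (insert v H) E {v, x})"
proof -
  obtain X where X: "homogeneous (insert v H) E X" "1 < card X" "card X < card (insert v H)"
    using assms(4) unfolding decomposable_def prime_tour_def by blast
  have XvH: "X \<subseteq> insert v H"
    using X(1) unfolding homogeneous_def by blast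
  have "X \<inter> H = X - {v}"
    using XvH assms(2) by blast
  then have XH: "homogeneous H E (X - {v})"
    using homogeneous_restrict[OF X(1) subset_insertI] by simp
  have finX: "finite X"
    using XvH assms(1) finite_subset by blast
  show ?thesis
  proof (cases "v \<in> X")
    case False
    then have "X \<subseteq> H" "\<not> card X < card H"
      using XvH prime_tourE[OF assms(3) XH] X(2) by auto
    then have "X = H"
      using assms(1) card_seteq not_le by blast
    then show ?thesis using X(1) by blast
  next
    case True
    have "card (X - {v}) < card H"
      using X(2,3) True finX assms(1,2) by simp
    then have "card (X - {v}) = 1"
      using prime_tourE[OF assms(3) XH] X(2) True finX by fastforce
    then obtain x where "X - {v} = {x}"
      by (meson card_1_singletonE)
    then have "X = {v, x}" "x \<in> H"
      using True XvH by auto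
    then show ?thesis using X(1) by blast
  qed
qed

lemma prime_tour_insert_cases_Vx:
  assumes "tournament V E" "H \<subseteq> V" "u \<in> V - H" "prime_tour H E"
    and "decomposable (insert u H) E"
  shows "homogeneous (insert u H) E H \<or> (\<exists>x\<in>H. u \<in> Vx V E H x)"
proof -
  have "finite H"
    using assms(1,2) finite_subset unfolding tournament_def by blast
  then show ?thesis
    using prime_tour_insert_cases[of H u E] assms(3-5) unfolding Vx_def by blast
qed

lemma prime_tour_insert_not_uniform_and_twin:
  assumes "tournament V E" "prime_tour I E" "card I \<ge> 3" "x \<in> I" "u \<notin> I"
    and "homogeneous (insert u I) E I" "homogeneous (insert u I) E {u, x}"
  shows False
proof -
  have twin: "(w, u) \<in> E \<and> (w, x) \<in> E \<or> (u, w) \<in> E \<and> (x, w) \<in> E" if "w \<in> I - {x}" for w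
    using homogeneous_pairD[OF assms(7), of w] that assms(5) by blast
  have "(\<forall>w\<in>I - {x}. (x, w) \<in> E) \<or> (\<forall>w\<in>I - {x}. (w, x) \<in> E)"
    using homogeneous_insert_uniform[OF assms(6,5)]
  proof
    assume "\<forall>w\<in>I. (u, w) \<in> E"
    then have "(x, w) \<in> E" if "w \<in> I - {x}" for w
      using twin[OF that] tournament_asym[OF assms(1), of u w] that by blast
    then show ?thesis by blast
  next
    assume "\<forall>w\<in>I. (w, u) \<in> E"
    then have "(w, x) \<in> E" if "w \<in> I - {x}" for w
      using twin[OF that] tournament_asym[OF assms(1), of w u] that by blast
    then show ?thesis by blast
  qed
  then have "homogeneous I E (I - {x})"
    using assms(4) unfolding homogeneous_def by auto
  moreover have "finite I"
    using assms(3) card.infinite by force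
  then have "1 < card (I - {x})" "card (I - {x}) < card I"
    using assms(3,4) by (simp_all add: card_Diff1_less)
  ultimately show False
    using prime_tourE[OF assms(2)] by blast
qed

lemma prime_tour_insert_twin_unique:
  assumes "tournament V E" "prime_tour I E" "card I \<ge> 3" "x \<in> I" "y \<in> I" "u \<notin> I"
    and "homogeneous (insert u I) E {u, x}" "homogeneous (insert u I) E {u, y}"
  shows "x = y"
proof (rule ccontr)
  assume "x \<noteq> y"
  have "(w, x) \<in> E \<and> (w, y) \<in> E \<or> (x, w) \<in> E \<and> (y, w) \<in> E" if "w \<in> I - {x, y}" for w
    using homogeneous_pairD[OF assms(7), of w] homogeneous_pairD[OF assms(8), of w] that assms(6)
      tournament_asym[OF assms(1), of w u] tournament_asym[OF assms(1), of u w] by blast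
  then have "homogeneous I E {x, y}"
    using assms(4,5) unfolding homogeneous_def by auto
  moreover have "card {x, y} = 2"
    using \<open>x \<noteq> y\<close> by simp
  ultimately show False
    using prime_tourE[OF assms(2), of "{x, y}"] assms(3) by linarith
qed

lemma prime_tour_not_uniform_or_twin_on_both_sides:
  assumes T: "tournament V E" and prime: "prime_tour V E"
    and V: "V = insert u (H1 \<union> H2)" and u: "u \<notin> H1 \<union> H2"
    and Int: "prime_tour (H1 \<inter> H2) E" "card (H1 \<inter> H2) \<ge> 3"
    and H1: "homogeneous (insert u H1) E H1 \<or> (\<exists>x\<in>H1 \<inter> H2. homogeneous (insert u H1) E {u, x})"
    and H2: "homogeneous (insert u H2) E H2 \<or> (\<exists>x\<in>H1 \<inter> H2. homogeneous (insert u H2) E {u, x})"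
  shows False
proof -
  define I where "I = H1 \<inter> H2"
  have fin: "finite (H1 \<union> H2)"
    using T V unfolding tournament_def by auto
  then have "card (H1 \<union> H2) \<ge> card I"
    unfolding I_def by (intro card_mono) auto
  with fin have card_V: "card V = Suc (card (H1 \<union> H2))" "card (H1 \<union> H2) \<ge> 3"
    using V u Int(2) I_def by auto
  have uniform_I: "homogeneous (insert u I) E I" if "homogeneous (insert u H) E H" "I \<subseteq> H" "u \<notin> H" for H
    using homogeneous_restrict[OF that(1), of "insert u I"] that(2,3)
    by (simp add: Int_absorb1 insert_mono subset_insertI2)
  have twin_I: "homogeneous (insert u I) E {u, x}" if "homogeneous (insert u H) E {u, x}" "I \<subseteq> H" "x \<in> I" for H x
    using homogeneous_restrict[OF that(1), of "insert u I"] that(2,3)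
    by (simp add: insert_absorb subset_insertI2)
  have not_both: "\<not> (homogeneous (insert u I) E I \<and> homogeneous (insert u I) E {u, x})" if "x \<in> I" for x
    using prime_tour_insert_not_uniform_and_twin[OF T Int[folded I_def] that] u I_def by blast
  consider "homogeneous (insert u H1) E H1" "homogeneous (insert u H2) E H2"
    | x y where "x \<in> I" "y \<in> I" "homogeneous (insert u H1) E {u, x}" "homogeneous (insert u H2) E {u, y}"
    using H1 H2 uniform_I twin_I not_both u unfolding I_def by (metis Int_lower1 Int_lower2 UnCI)
  then show False
  proof cases
    case 1
    have "homogeneous V E (H1 \<union> H2)"
      using homogeneous_insert_Un[OF T 1] V Int(2) by fastforce
    then show False
      using prime_tourE[OF prime] card_V by force
  next
    case (2 x y)
    have "x = y"
      using prime_tour_insert_twin_unique[OF T Int[folded I_def] 2(1,2)] twin_I 2 u I_def by blast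
    then have "homogeneous V E {u, x}"
      using homogeneous_Un_ambient[OF 2(3) 2(4)[folded \<open>x = y\<close>]] V by simp
    moreover have "u \<noteq> x"
      using 2(1) u I_def by auto
    ultimately show False
      using prime_tourE[OF prime] card_V by force
  qed
qed

theorem proposition3p6:
  fixes V :: "'a set" and E :: "('a \<times> 'a) set" and u :: 'a
    and H1 H2 :: "'a set"
  assumes "tournament V E"
    and "prime_tour V E"
    and "u \<in> V"
    and "H1 \<subseteq> V" and "H1 \<noteq> {}" and "H2 \<subseteq> V" and "H2 \<noteq> {}"
    and "prime_tour H1 E" and "prime_tour H2 E"
    and "H1 \<union> H2 = V - {u}"
    and "decomposable (insert u H1) E" and "decomposable (insert u H2) E"
    and "prime_tour (H1 \<inter> H2) E" and "card (H1 \<inter> H2) \<ge> 3"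
  shows "(\<exists>x\<in>H1 - H2. u \<in> Vx V E H1 x) \<or> (\<exists>y\<in>H2 - H1. u \<in> Vx V E H2 y)"
proof (rule ccontr)
  assume neg: "\<not> ?thesis"
  have u: "u \<notin> H1 \<union> H2" "V = insert u (H1 \<union> H2)"
    using assms(3,10) by auto
  have "homogeneous (insert u H1) E H1 \<or> (\<exists>x\<in>H1 \<inter> H2. homogeneous (insert u H1) E {u, x})"
    using prime_tour_insert_cases_Vx[OF assms(1,4) _ assms(8,11)] neg u unfolding Vx_def by blast
  moreover have "homogeneous (insert u H2) E H2 \<or> (\<exists>x\<in>H1 \<inter> H2. homogeneous (insert u H2) E {u, x})"
    using prime_tour_insert_cases_Vx[OF assms(1,6) _ assms(9,12)] neg u unfolding Vx_def by blast
  ultimately show False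
    using prime_tour_not_uniform_or_twin_on_both_sides[OF assms(1,2) u(2,1) assms(13,14)] by blast
qed

end
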